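(* Let $(\mathcal{X},\mathcal{F})$ be a measurable space, $\bar p$ a probability measure on $\mathcal{X}$, $r:\mathcal{X}\to\mathbb{R}$ a measurable reward function, $M\ge 1$ an integer and $\alpha\in(0,\infty)$. Let $X^{(1)},\dots,X^{(M)}$ be i.i.d. with law $\bar p$, set $R_i:=r(X^{(i)})$, let $\hat P_X:=\frac1M\sum_{i=1}^M\delta_{X^{(i)}}$ be their empirical distribution and $\hat F_R(u):=\frac1M\#\{i: R_i\le u\}$ the empirical CDF of the rewards. Let $A:\mathbb{R}\times[0,1]\times\mathcal{X}\times\mathcal{P}(\mathcal{X})\to[0,1]$ be a measurable acceptance function which is coordinatewise nondecreasing in its first two arguments. Put $p_i:=A(R_i,\hat F_R(R_i),X^{(i)},\hat P_X)$ and let $C_1,\dots,C_M$ be $\{0,1\}$-valued random variables (not necessarily independent of one another) with $\mathbb{P}(C_i=1\mid X^{(1)},\dots,X^{(M)})=p_i$ for each $i$. Let the accepted set be $\mathcal{A}:=\{X^{(i)}: C_i=1\}$ and assume $\mathbb{P}(X^{(1)}\in\mathcal{A})>0$. Define $$g(x):=\mathbb{E}\big[A(r(x),\hat F_R(r(x)),x,\hat P_X)\,\big|\,X^{(1)}=x\big],\qquad \frac{\hat r(x)}{\alpha}:=\log g(x)\in[-\infty,0],$$ where the expectation is over $X^{(2)},\dots,X^{(M)}$ (i.e. over the randomness of $\hat F_R,\hat P_X$ given $X^{(1)}=x$). Then the conditional law of $X^{(1)}$ given $X^{(1)}\in\mathcal{A}$ has density $g/\int g\,d\bar p$ with respect to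 $\bar p$, i.e. it is proportional to $\exp(\hat r(x)/\alpha)\,\bar p(dx)$; equivalently, it is the solution of the KL-regularized (PPO) problem $$\operatorname*{argmax}_{\hat p}\Big[\mathbb{E}_{x\sim\hat p}\,\hat r(x)-\alpha\,\mathsf{KL}(\hat p\,\|\,\bar p)\Big].$$
   Context: $\mathcal{P}(\mathcal{X})$ denotes the set of probability measures on $\mathcal{X}$. For a reward $\rho$ and reference $\bar p$, the maximizer over probability measures $p$ of $\mathbb{E}_{X\sim p}[\rho(X)]-\alpha\mathsf{KL}(p\|\bar p)$ is the measure $p(dx)\propto\exp(\rho(x)/\alpha)\bar p(dx)$. The sampling scheme described (accepting $X^{(i)}$ iff $C_i=1$) is called Generalized Rejection Sampling (GRS). *)

theory Defs
  imports "HOL-Probability.Probability"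
begin

definition empirical_measure :: "'a measure \<Rightarrow> nat \<Rightarrow> (nat \<Rightarrow> 'a) \<Rightarrow> 'a measure" where
  "empirical_measure pbar M xs =
     measure_of (space pbar) (sets pbar)
       (\<lambda>B. ennreal (real (card {i \<in> {1..M}. xs i \<in> B}) / real M))"

definition empirical_cdf :: "('a \<Rightarrow> real) \<Rightarrow> nat \<Rightarrow> (nat \<Rightarrow> 'a) \<Rightarrow> real \<Rightarrow> real" where
  "empirical_cdf r M xs u = real (card {i \<in> {1..M}. r (xs i) \<le> u}) / real M"

text \<open>g(x) = E[ A(r x, F_R(r x), x, P_X) | X1 = x ]: the expectation over the
  i.i.d. samples X2, ..., XM with X1 fixed to x.\<close>
definition accept_g ::
  "'a measure \<Rightarrow> ('a \<Rightarrow> real) \<Rightarrow> nat \<Rightarrow> (real \<Rightarrow> real \<Rightarrow> 'a \<Rightarrow> 'a measure \<Rightarrow> real) \<Rightarrow> 'a \<Rightarrow> real"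
where
  "accept_g pbar r M A x =
     (\<integral>ys. (let xs = (\<lambda>j. if j = 1 then x else ys j) in
              A (r x) (empirical_cdf r M xs (r x)) x (empirical_measure pbar M xs))
      \<partial>(PiM {2..M} (\<lambda>_. pbar)))"

end

theory Submission
  imports Defs
begin

(*
  Given the whole sample, the first point is accepted with probability
  p_1 = F(X_1, ..., X_M), where F is a bounded measurable function of the sample vector.
  Since the sample vector has the product law pbar^M, P(X_1 \<in> B, C_1) is the integral
  of 1_B(x_1) F over pbar^M; integrating out x_2, ..., x_M first (Fubini) turns F into
  g(x_1), so P(X_1 \<in> B, C_1) = \<integral>_B g dpbar. Taking B the whole space gives P(C_1),
  and dividing yields the conditional law.
*)

lemma integral_PiM_insert_fun_upd:
  fixes f :: "('i \<Rightarrow> 'a) \<Rightarrow> 'b::{banach, second_countable_topology}"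
  assumes M: "\<And>j. j \<in> insert i I \<Longrightarrow> prob_space (M j)"
    and f: "integrable (PiM (insert i I) M) f"
  shows "integral\<^sup>L (PiM (insert i I) M) f = (\<integral>x. (\<integral>ys. f (ys(i := x)) \<partial>PiM I M) \<partial>M i)"
proof -
  interpret Mi: prob_space "M i" using M by simp
  interpret MI: prob_space "PiM I M" using M by (intro prob_space_PiM) simp
  interpret pair_sigma_finite "M i" "PiM I M" ..
  define upd where "upd = (\<lambda>(x, ys). ys(i := x) :: 'i \<Rightarrow> 'a)"
  have upd_meas: "upd \<in> measurable (M i \<Otimes>\<^sub>M PiM I M) (PiM (insert i I) M)"
    using measurable_compose[OF measurable_pair_swap' measurable_add_dim[of i I M]]
    by (simp add: upd_def case_prod_beta)
  have law: "distr (M i \<Otimes>\<^sub>M PiM I M) (PiM (insert i I) M) upd = PiM (insert i I) M"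
    unfolding upd_def using M by (intro distr_pair_PiM_eq_PiM) auto
  have f_meas: "f \<in> borel_measurable (PiM (insert i I) M)"
    using f by simp
  have "integrable (M i \<Otimes>\<^sub>M PiM I M) (\<lambda>z. f (upd z))"
    using f by (subst integrable_distr_eq[OF upd_meas f_meas, symmetric]) (simp add: law)
  then have "(\<integral>x. (\<integral>ys. f (upd (x, ys)) \<partial>PiM I M) \<partial>M i)
      = (\<integral>z. f (upd z) \<partial>(M i \<Otimes>\<^sub>M PiM I M))"
    by (rule integral_fst')
  also have "\<dots> = integral\<^sup>L (PiM (insert i I) M) f"
    by (subst law[symmetric]) (rule integral_distr[OF upd_meas f_meas, symmetric])
  finally show ?thesis by (simp add: upd_def)
qed

lemma (in prob_space) indep_vars_identically_distributed_eq_PiM: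
  assumes "I \<noteq> {}"
    and X_meas: "\<And>i. i \<in> I \<Longrightarrow> X i \<in> measurable M N"
    and X_law: "\<And>i. i \<in> I \<Longrightarrow> distr M N (X i) = N"
    and indep: "indep_vars (\<lambda>_. N) X I"
  shows "distr M (PiM I (\<lambda>_. N)) (\<lambda>w. \<lambda>i\<in>I. X i w) = PiM I (\<lambda>_. N)"
proof -
  have "distr M (PiM I (\<lambda>_. N)) (\<lambda>w. \<lambda>i\<in>I. X i w) = (\<Pi>\<^sub>M i\<in>I. distr M N (X i))"
    using indep_vars_iff_distr_eq_PiM'[of I X "\<lambda>_. N"] assms by simp
  also have "\<dots> = PiM I (\<lambda>_. N)"
    by (intro PiM_cong refl) (simp add: X_law)
  finally show ?thesis .
qed

lemma (in prob_space) integral_iid_vector: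
  fixes G :: "('i \<Rightarrow> 'c) \<Rightarrow> 'b::{banach, second_countable_topology}"
  assumes "I \<noteq> {}"
    and X_meas: "\<And>i. i \<in> I \<Longrightarrow> X i \<in> measurable M N"
    and X_law: "\<And>i. i \<in> I \<Longrightarrow> distr M N (X i) = N"
    and indep: "indep_vars (\<lambda>_. N) X I"
    and G: "G \<in> borel_measurable (PiM I (\<lambda>_. N))"
  shows "(\<integral>w. G (\<lambda>i\<in>I. X i w) \<partial>M) = integral\<^sup>L (PiM I (\<lambda>_. N)) G"
proof -
  have "(\<lambda>w. \<lambda>i\<in>I. X i w) \<in> measurable M (PiM I (\<lambda>_. N))"
    using X_meas by (intro measurable_restrict)
  from integral_distr[OF this G] show ?thesis
    by (simp add: indep_vars_identically_distributed_eq_PiM[OF assms(1-4)])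
qed

lemma emeasure_distr_uniform_count_measure:
  assumes I: "finite I" and f: "f \<in> measurable (uniform_count_measure I) N" and B: "B \<in> sets N"
  shows "emeasure (distr (uniform_count_measure I) N f) B
    = ennreal (real (card {i \<in> I. f i \<in> B}) / real (card I))"
proof -
  have "emeasure (distr (uniform_count_measure I) N f) B
      = emeasure (uniform_count_measure I) {i \<in> I. f i \<in> B}"
    using f B by (simp add: emeasure_distr space_uniform_count_measure Int_def conj_commute)
  also have "\<dots> = ennreal (real (card {i \<in> I. f i \<in> B}) / real (card I))"
    using I by (subst emeasure_uniform_count_measure) auto
  finally show ?thesis .
qed

lemma measurable_uniform_count_measure_iff:
  "f \<in> measurable (uniform_count_measure I) N \<longleftrightarrow> f \<in> I \<rightarrow> space N"
  by (auto simp: measurable_def space_uniform_count_measure sets_uniform_count_measure)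

lemma borel_measurable_card_filter:
  assumes I: "finite I" and P: "\<And>i. i \<in> I \<Longrightarrow> Measurable.pred N (\<lambda>x. P x i)"
  shows "(\<lambda>x. real (card {i \<in> I. P x i})) \<in> borel_measurable N"
proof -
  have "real (card {i \<in> I. P x i}) = (\<Sum>i\<in>I. if P x i then 1 else 0)" for x
    using I by (simp add: sum.If_cases Int_def)
  moreover have "(\<lambda>x. \<Sum>i\<in>I. if P x i then 1 else 0 :: real) \<in> borel_measurable N"
    using P by (intro borel_measurable_sum) measurable
  ultimately show ?thesis by simp
qed

lemma empirical_measure_eq_distr:
  assumes "xs \<in> {1..M} \<rightarrow> space pbar"
  shows "empirical_measure pbar M xs = distr (uniform_count_measure {1..M}) pbar xs"
proof -
  have xs_meas: "xs \<in> measurable (uniform_count_measure {1..M}) pbar"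
    using assms by (simp add: measurable_uniform_count_measure_iff)
  have "distr (uniform_count_measure {1..M}) pbar xs
        = measure_of (space pbar) (sets pbar) (emeasure (distr (uniform_count_measure {1..M}) pbar xs))"
    using measure_of_of_measure[of "distr (uniform_count_measure {1..M}) pbar xs"] by simp
  also have "\<dots> = empirical_measure pbar M xs"
    unfolding empirical_measure_def
  proof (rule measure_of_eq[OF sets.space_closed])
    fix B assume "B \<in> sigma_sets (space pbar) (sets pbar)"
    then have "B \<in> sets pbar" by (simp add: sets.sigma_sets_eq)
    from emeasure_distr_uniform_count_measure[OF finite_atLeastAtMost xs_meas this]
    show "emeasure (distr (uniform_count_measure {1..M}) pbar xs) B
        = ennreal (real (card {i \<in> {1..M}. xs i \<in> B}) / real M)" by simp
  qed
  finally show ?thesis ..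
qed

lemma emeasure_empirical_measure:
  assumes "xs \<in> {1..M} \<rightarrow> space pbar" and "B \<in> sets pbar"
  shows "emeasure (empirical_measure pbar M xs) B
    = ennreal (real (card {i \<in> {1..M}. xs i \<in> B}) / real M)"
proof -
  have "xs \<in> measurable (uniform_count_measure {1..M}) pbar"
    using assms(1) by (simp add: measurable_uniform_count_measure_iff)
  from emeasure_distr_uniform_count_measure[OF finite_atLeastAtMost this assms(2)]
  show ?thesis by (simp add: empirical_measure_eq_distr[OF assms(1)])
qed

lemma empirical_measure_in_prob_algebra:
  assumes "M \<ge> 1" and "xs \<in> {1..M} \<rightarrow> space pbar"
  shows "empirical_measure pbar M xs \<in> space (prob_algebra pbar)"
proof -
  have "prob_space (uniform_count_measure {1..M})"
    using assms(1) by (intro prob_space_uniform_count_measure) auto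
  moreover have "xs \<in> measurable (uniform_count_measure {1..M}) pbar"
    using assms(2) by (simp add: measurable_uniform_count_measure_iff)
  ultimately show ?thesis
    by (simp add: empirical_measure_eq_distr[OF assms(2)] space_prob_algebra prob_space.prob_space_distr)
qed

lemma measurable_empirical_measure:
  assumes "M \<ge> 1"
  shows "empirical_measure pbar M \<in> measurable (PiM {1..M} (\<lambda>_. pbar)) (subprob_algebra pbar)"
proof (rule measurable_subprob_algebra)
  fix xs assume "xs \<in> space (PiM {1..M} (\<lambda>_. pbar))"
  then have "empirical_measure pbar M xs \<in> space (prob_algebra pbar)"
    by (intro empirical_measure_in_prob_algebra[OF assms]) (auto simp: space_PiM)
  then show "subprob_space (empirical_measure pbar M xs)"
    and "sets (empirical_measure pbar M xs) = sets pbar"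
    by (auto simp: space_prob_algebra intro: prob_space_imp_subprob_space)
next
  fix B assume B: "B \<in> sets pbar"
  have emeasure_eq: "emeasure (empirical_measure pbar M xs) B
      = ennreal (real (card {i \<in> {1..M}. xs i \<in> B}) / real M)" if "xs \<in> space (PiM {1..M} (\<lambda>_. pbar))" for xs
    using that B by (intro emeasure_empirical_measure) (auto simp: space_PiM)
  have "(\<lambda>xs. ennreal (real (card {i \<in> {1..M}. xs i \<in> B}) / real M))
        \<in> borel_measurable (PiM {1..M} (\<lambda>_. pbar))"
    using B by (intro measurable_compose[OF _ measurable_ennreal] borel_measurable_divide
        borel_measurable_card_filter) auto
  then show "(\<lambda>xs. emeasure (empirical_measure pbar M xs) B)
      \<in> borel_measurable (PiM {1..M} (\<lambda>_. pbar))"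
    by (rule measurable_cong[THEN iffD1, rotated]) (simp add: emeasure_eq)
qed

lemma empirical_cdf_restrict: "empirical_cdf r M (restrict xs {1..M}) = empirical_cdf r M xs"
proof -
  have "{i \<in> {1..M}. r (restrict xs {1..M} i) \<le> u} = {i \<in> {1..M}. r (xs i) \<le> u}" for u
    by auto
  then show ?thesis unfolding empirical_cdf_def by simp
qed

lemma empirical_measure_restrict:
  "empirical_measure pbar M (restrict xs {1..M}) = empirical_measure pbar M xs"
proof -
  have "{i \<in> {1..M}. restrict xs {1..M} i \<in> B} = {i \<in> {1..M}. xs i \<in> B}" for B
    by auto
  then show ?thesis unfolding empirical_measure_def by simp
qed

lemma empirical_cdf_in_unit_interval: "M \<ge> 1 \<Longrightarrow> empirical_cdf r M xs u \<in> {0..1}"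
proof -
  assume "M \<ge> 1"
  moreover have "card {i \<in> {1..M}. r (xs i) \<le> u} \<le> card {1..M}" by (intro card_mono) auto
  ultimately show ?thesis unfolding empirical_cdf_def by auto
qed

lemma borel_measurable_empirical_cdf:
  assumes r: "r \<in> borel_measurable pbar" and u: "u \<in> borel_measurable (PiM {1..M} (\<lambda>_. pbar))"
  shows "(\<lambda>xs. empirical_cdf r M xs (u xs)) \<in> borel_measurable (PiM {1..M} (\<lambda>_. pbar))"
  unfolding empirical_cdf_def
proof (intro borel_measurable_divide borel_measurable_card_filter borel_measurable_const finite_atLeastAtMost)
  fix i :: nat assume i: "i \<in> {1..M}"
  have "(\<lambda>xs. r (xs i)) \<in> borel_measurable (PiM {1..M} (\<lambda>_. pbar))"
    by (intro measurable_compose[OF measurable_component_singleton[OF i] r])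
  then show "Measurable.pred (PiM {1..M} (\<lambda>_. pbar)) (\<lambda>xs. r (xs i) \<le> u xs)"
    using u unfolding pred_def by (rule borel_measurable_le)
qed

definition accept_prob_first ::
  "'a measure \<Rightarrow> ('a \<Rightarrow> real) \<Rightarrow> nat \<Rightarrow> (real \<Rightarrow> real \<Rightarrow> 'a \<Rightarrow> 'a measure \<Rightarrow> real)
    \<Rightarrow> (nat \<Rightarrow> 'a) \<Rightarrow> real"
where
  "accept_prob_first pbar r M A xs =
     A (r (xs 1)) (empirical_cdf r M xs (r (xs 1))) (xs 1) (empirical_measure pbar M xs)"

lemma accept_prob_first_restrict:
  "M \<ge> 1 \<Longrightarrow> accept_prob_first pbar r M A (restrict xs {1..M}) = accept_prob_first pbar r M A xs"
  unfolding accept_prob_first_def empirical_cdf_restrict empirical_measure_restrict by simp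

lemma borel_measurable_accept_prob_first:
  assumes r: "r \<in> borel_measurable pbar" and M: "M \<ge> 1"
    and A: "(\<lambda>(u, t, x, \<mu>). A u t x \<mu>)
              \<in> borel_measurable (borel \<Otimes>\<^sub>M borel \<Otimes>\<^sub>M pbar \<Otimes>\<^sub>M subprob_algebra pbar)"
  shows "accept_prob_first pbar r M A \<in> borel_measurable (PiM {1..M} (\<lambda>_. pbar))"
proof -
  have first: "(\<lambda>xs. xs 1) \<in> measurable (PiM {1..M} (\<lambda>_. pbar)) pbar"
    using M by (intro measurable_component_singleton) auto
  have "(\<lambda>xs. (r (xs 1), empirical_cdf r M xs (r (xs 1)), xs 1, empirical_measure pbar M xs))
      \<in> measurable (PiM {1..M} (\<lambda>_. pbar)) (borel \<Otimes>\<^sub>M borel \<Otimes>\<^sub>M pbar \<Otimes>\<^sub>M subprob_algebra pbar)"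
    using measurable_compose[OF first r]
    by (intro measurable_Pair borel_measurable_empirical_cdf r first measurable_empirical_measure M)
  from measurable_compose[OF this A] show ?thesis
    by (simp add: accept_prob_first_def[abs_def])
qed

lemma accept_prob_first_bounds:
  assumes M: "M \<ge> 1" and xs: "xs \<in> {1..M} \<rightarrow> space pbar"
    and A_range: "\<And>u t x \<mu>. t \<in> {0..1} \<Longrightarrow> x \<in> space pbar \<Longrightarrow> \<mu> \<in> space (prob_algebra pbar)
                     \<Longrightarrow> 0 \<le> A u t x \<mu> \<and> A u t x \<mu> \<le> 1"
  shows "0 \<le> accept_prob_first pbar r M A xs \<and> accept_prob_first pbar r M A xs \<le> 1"
  unfolding accept_prob_first_def
  using M xs by (intro A_range empirical_cdf_in_unit_interval empirical_measure_in_prob_algebra) auto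

lemma accept_g_eq_integral_accept_prob_first:
  "accept_g pbar r M A x = (\<integral>ys. accept_prob_first pbar r M A (ys(1 := x)) \<partial>PiM {2..M} (\<lambda>_. pbar))"
proof -
  have "(\<lambda>j. if j = 1 then x else ys j) = ys(1 := x)" for ys :: "nat \<Rightarrow> 'a"
    by auto
  then show ?thesis
    unfolding accept_g_def accept_prob_first_def Let_def by simp
qed

lemma integral_accept_prob_first_eq_accept_g:
  assumes pbar: "prob_space pbar" and r: "r \<in> borel_measurable pbar" and M: "M \<ge> 1"
    and A_meas: "(\<lambda>(u, t, x, \<mu>). A u t x \<mu>)
              \<in> borel_measurable (borel \<Otimes>\<^sub>M borel \<Otimes>\<^sub>M pbar \<Otimes>\<^sub>M subprob_algebra pbar)"
    and A_range: "\<And>u t x \<mu>. t \<in> {0..1} \<Longrightarrow> x \<in> space pbar \<Longrightarrow> \<mu> \<in> space (prob_algebra pbar)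
                     \<Longrightarrow> 0 \<le> A u t x \<mu> \<and> A u t x \<mu> \<le> 1"
    and B: "B \<in> sets pbar"
  shows "(\<integral>xs. indicator B (xs 1) * accept_prob_first pbar r M A xs \<partial>PiM {1..M} (\<lambda>_. pbar))
         = (\<integral>x. indicator B x * accept_g pbar r M A x \<partial>pbar)"
proof -
  let ?N = "PiM {1..M} (\<lambda>_. pbar)" and ?F = "accept_prob_first pbar r M A"
  interpret N: prob_space ?N using pbar by (intro prob_space_PiM)
  have first: "(\<lambda>xs. xs 1) \<in> measurable ?N pbar"
    using M by (intro measurable_component_singleton) auto
  have F_bounds: "0 \<le> ?F xs \<and> ?F xs \<le> 1" if "xs \<in> space ?N" for xs
    using that by (intro accept_prob_first_bounds[OF M]) (auto simp: space_PiM A_range)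
  have "integrable ?N (\<lambda>xs. indicator B (xs 1) * ?F xs)"
  proof (rule N.integrable_const_bound[where B=1])
    show "AE xs in ?N. norm (indicator B (xs 1) * ?F xs) \<le> 1"
      using F_bounds by (intro AE_I2) (auto simp: indicator_def)
    show "(\<lambda>xs. indicator B (xs 1) * ?F xs) \<in> borel_measurable ?N"
      using measurable_compose[OF first borel_measurable_indicator[OF B]]
      by (intro borel_measurable_times borel_measurable_accept_prob_first r M A_meas)
  qed
  moreover have "{1..M} = insert 1 {2..M}" using M by auto
  ultimately have "(\<integral>xs. indicator B (xs 1) * ?F xs \<partial>?N)
      = (\<integral>x. (\<integral>ys. indicator B x * ?F (ys(1 := x)) \<partial>PiM {2..M} (\<lambda>_. pbar)) \<partial>pbar)"
    using pbar by (simp add: integral_PiM_insert_fun_upd)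
  also have "\<dots> = (\<integral>x. indicator B x * accept_g pbar r M A x \<partial>pbar)"
    by (simp add: accept_g_eq_integral_accept_prob_first)
  finally show ?thesis .
qed

lemma measure_accepted_first_in:
  fixes P :: "'w measure" and X :: "nat \<Rightarrow> 'w \<Rightarrow> 'a" and C :: "'w \<Rightarrow> bool"
  assumes P: "prob_space P" and pbar: "prob_space pbar"
    and r: "r \<in> borel_measurable pbar" and M: "M \<ge> 1"
    and X_meas: "\<And>i. i \<in> {1..M} \<Longrightarrow> X i \<in> measurable P pbar"
    and X_law: "\<And>i. i \<in> {1..M} \<Longrightarrow> distr P pbar (X i) = pbar"
    and X_indep: "prob_space.indep_vars P (\<lambda>_. pbar) X {1..M}"
    and A_meas: "(\<lambda>(u, t, x, \<mu>). A u t x \<mu>)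
              \<in> borel_measurable (borel \<Otimes>\<^sub>M borel \<Otimes>\<^sub>M pbar \<Otimes>\<^sub>M subprob_algebra pbar)"
    and A_range: "\<And>u t x \<mu>. t \<in> {0..1} \<Longrightarrow> x \<in> space pbar \<Longrightarrow> \<mu> \<in> space (prob_algebra pbar)
                     \<Longrightarrow> 0 \<le> A u t x \<mu> \<and> A u t x \<mu> \<le> 1"
    and C_cond: "\<And>B. B \<in> sets (PiM {1..M} (\<lambda>_. pbar)) \<Longrightarrow>
        measure P {w \<in> space P. C w \<and> (\<lambda>j\<in>{1..M}. X j w) \<in> B}
        = (\<integral>w. indicator B (\<lambda>j\<in>{1..M}. X j w) * accept_prob_first pbar r M A (\<lambda>j. X j w) \<partial>P)"
    and B: "B \<in> sets pbar"
  shows "measure P {w \<in> space P. X 1 w \<in> B \<and> C w} = (\<integral>x. indicator B x * accept_g pbar r M A x \<partial>pbar)"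
proof -
  interpret P: prob_space P by (rule P)
  let ?N = "PiM {1..M} (\<lambda>_. pbar)" and ?F = "accept_prob_first pbar r M A"
    and ?X = "\<lambda>w. \<lambda>j\<in>{1..M}. X j w"
  define B1 where "B1 = {xs \<in> space ?N. xs 1 \<in> B}"
  have one: "1 \<in> {1..M}" using M by simp
  have B1: "B1 \<in> sets ?N"
    using measurable_sets[OF measurable_component_singleton[OF one] B]
    by (simp add: B1_def vimage_def Int_def conj_commute)
  have "?X \<in> measurable P ?N"
    using X_meas by (intro measurable_restrict)
  then have "{w \<in> space P. X 1 w \<in> B \<and> C w} = {w \<in> space P. C w \<and> ?X w \<in> B1}"
    using one by (auto simp: B1_def dest: measurable_space)
  then have "measure P {w \<in> space P. X 1 w \<in> B \<and> C w}
      = (\<integral>w. indicator B1 (?X w) * ?F (\<lambda>j. X j w) \<partial>P)"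
    using C_cond[OF B1] by simp
  also have "\<dots> = (\<integral>w. indicator B1 (?X w) * ?F (?X w) \<partial>P)"
    by (simp only: accept_prob_first_restrict[OF M])
  also have "\<dots> = (\<integral>xs. indicator B1 xs * ?F xs \<partial>?N)"
    using M X_meas X_law X_indep
    by (intro P.integral_iid_vector[where G="\<lambda>xs. indicator B1 xs * ?F xs"] borel_measurable_times
        borel_measurable_indicator B1 borel_measurable_accept_prob_first r M A_meas) auto
  also have "\<dots> = (\<integral>xs. indicator B (xs 1) * ?F xs \<partial>?N)"
    by (intro Bochner_Integration.integral_cong) (auto simp: B1_def indicator_def)
  also have "\<dots> = (\<integral>x. indicator B x * accept_g pbar r M A x \<partial>pbar)"
    by (rule integral_accept_prob_first_eq_accept_g[OF pbar r M A_meas A_range B])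
  finally show ?thesis .
qed

theorem lemma2:
  fixes P :: "'w measure" and pbar :: "'a measure"
    and r :: "'a \<Rightarrow> real" and M :: nat and \<alpha> :: real
    and X :: "nat \<Rightarrow> 'w \<Rightarrow> 'a" and C :: "nat \<Rightarrow> 'w \<Rightarrow> bool"
    and A :: "real \<Rightarrow> real \<Rightarrow> 'a \<Rightarrow> 'a measure \<Rightarrow> real"
  assumes P: "prob_space P"
    and pbar: "prob_space pbar"
    and r_meas: "r \<in> borel_measurable pbar"
    and M: "M \<ge> 1"
    and alpha: "\<alpha> > 0"
    and X_meas: "\<And>i. i \<in> {1..M} \<Longrightarrow> X i \<in> measurable P pbar"
    and X_law: "\<And>i. i \<in> {1..M} \<Longrightarrow> distr P pbar (X i) = pbar"
    and X_indep: "prob_space.indep_vars P (\<lambda>_. pbar) X {1..M}"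
    and A_meas: "(\<lambda>(u, t, x, \<mu>). A u t x \<mu>)
                   \<in> borel_measurable (borel \<Otimes>\<^sub>M borel \<Otimes>\<^sub>M pbar \<Otimes>\<^sub>M subprob_algebra pbar)"
    and A_range: "\<And>u t x \<mu>. t \<in> {0..1} \<Longrightarrow> x \<in> space pbar \<Longrightarrow> \<mu> \<in> space (prob_algebra pbar)
                     \<Longrightarrow> 0 \<le> A u t x \<mu> \<and> A u t x \<mu> \<le> 1"
    and A_mono1: "\<And>u u' t x \<mu>. u \<le> u' \<Longrightarrow> t \<in> {0..1} \<Longrightarrow> x \<in> space pbar
                     \<Longrightarrow> \<mu> \<in> space (prob_algebra pbar) \<Longrightarrow> A u t x \<mu> \<le> A u' t x \<mu>"
    and A_mono2: "\<And>u t t' x \<mu>. t \<le> t' \<Longrightarrow> t \<in> {0..1} \<Longrightarrow> t' \<in> {0..1} \<Longrightarrow> x \<in> space pbar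
                     \<Longrightarrow> \<mu> \<in> space (prob_algebra pbar) \<Longrightarrow> A u t x \<mu> \<le> A u t' x \<mu>"
    and C_meas: "\<And>i. i \<in> {1..M} \<Longrightarrow> {w \<in> space P. C i w} \<in> sets P"
    and C_cond: "\<And>i B. i \<in> {1..M} \<Longrightarrow> B \<in> sets (PiM {1..M} (\<lambda>_. pbar)) \<Longrightarrow>
        measure P {w \<in> space P. C i w \<and> (\<lambda>j\<in>{1..M}. X j w) \<in> B}
        = (\<integral>w. indicator B (\<lambda>j\<in>{1..M}. X j w) *
              A (r (X i w)) (empirical_cdf r M (\<lambda>j. X j w) (r (X i w))) (X i w)
                (empirical_measure pbar M (\<lambda>j. X j w)) \<partial>P)"
    and accept_pos: "measure P {w \<in> space P. C 1 w} > 0"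
  shows "\<forall>B \<in> sets pbar.
           cond_prob P (\<lambda>w. X 1 w \<in> B) (\<lambda>w. C 1 w)
           = (LINT x:B|pbar. accept_g pbar r M A x) / (\<integral>x. accept_g pbar r M A x \<partial>pbar)"
proof
  have one: "1 \<in> {1..M}" using M by simp
  have C1_cond: "measure P {w \<in> space P. C 1 w \<and> (\<lambda>j\<in>{1..M}. X j w) \<in> B'}
      = (\<integral>w. indicator B' (\<lambda>j\<in>{1..M}. X j w) * accept_prob_first pbar r M A (\<lambda>j. X j w) \<partial>P)"
    if "B' \<in> sets (PiM {1..M} (\<lambda>_. pbar))" for B'
    using C_cond[OF one that] by (simp add: accept_prob_first_def)
  have accepted_first_in: "measure P {w \<in> space P. X 1 w \<in> B \<and> C 1 w}
      = (\<integral>x. indicator B x * accept_g pbar r M A x \<partial>pbar)" if "B \<in> sets pbar" for B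
    using P pbar r_meas M X_meas X_law X_indep A_meas A_range C1_cond that
    by (rule measure_accepted_first_in)
  have "{w \<in> space P. C 1 w} = {w \<in> space P. X 1 w \<in> space pbar \<and> C 1 w}"
    using measurable_space[OF X_meas[OF one]] by auto
  then have accepted: "measure P {w \<in> space P. C 1 w} = (\<integral>x. accept_g pbar r M A x \<partial>pbar)"
    using accepted_first_in[OF sets.top] by (simp cong: Bochner_Integration.integral_cong)
  fix B assume "B \<in> sets pbar"
  with accepted_first_in accepted show "cond_prob P (\<lambda>w. X 1 w \<in> B) (\<lambda>w. C 1 w)
      = (LINT x:B|pbar. accept_g pbar r M A x) / (\<integral>x. accept_g pbar r M A x \<partial>pbar)"
    unfolding cond_prob_def set_lebesgue_integral_def by simp
qed

end
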